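(* There exist a constant $C>0$, a deterministic leader election algorithm with advice $\mathcal{A}$, and a map $G\mapsto \mathrm{Adv}(G)$ assigning a binary string to each feasible graph, such that for every feasible $n$-node graph $G$ with election index $\phi$: (1) the length of $\mathrm{Adv}(G)$ is at most $C\, n\log n$; and (2) when all nodes of $G$ receive $\mathrm{Adv}(G)$ as advice, $\mathcal{A}$ performs leader election in $G$ in time $\phi$.
   Context: A graph is a simple undirected connected finite graph with $n\ge 3$ nodes, which have no identifiers; at each node $v$ of degree $d$ the incident edges carry distinct port numbers $0,\dots,d-1$ (local to each node). The truncated view $\mathcal{V}^0(v)$ is a single node; $\mathcal{V}^{l+1}(v)$ is the port-labelled rooted tree whose root has, for every neighbour $v_i$ of $v$, a child $x_i$ joined by an edge carrying the same two port numbers as $\{v,v_i\}$ (the one at $v$ at the root side), and $x_i$ is the root of a copy of $\mathcal{V}^l(v_i)$. The augmented truncated view $\mathcal{B}^l(v)$ is $\mathcal{V}^l(v)$ with each leaf labelled by the degree in $G$ of the node it represents. A graph is feasible if for some $l$ the views $\mathcal{B}^l(v)$ of all nodes are pairwise distinct; its election index $\phi$ is the smallest such $l$ (equivalently, the minimum time of leader election when nodes know the port-labelled map of the graph). Model (LOCAL): synchronous rounds, all nodes start simultaneously, in each round every node exchanges arbitrary messages with all neighbours and computes arbitrarily. Leader election: every node $v$ outputs a sequence $(p_1,q_1,\dots,p_k,q_k)$ of nonnegative integers describing a simple path starting at $v$ whose $i$-th edge has port $p_i$ at its endpoint closer to $v$ and $q_i$ at the other endpoint; all these paths must end at a common node (the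 leader). Time is the number of rounds until all nodes output. Advice: before the start, an oracle knowing the entire port-labelled graph gives the same binary string (the advice) to all nodes; its length is the size of advice. A deterministic algorithm with advice: the actions/output of node $v$ in round $r$ are a function of the advice and of $\mathcal{B}^r(v)$. Logarithms are base 2. *)

theory Defs
  imports Complex_Main
begin

text \<open>A port-labelled graph on nodes 0..<pn G. Node v has degree pdeg G v, and
  pnb G v p is the neighbour reached from v through port p (p < pdeg G v).
  Node names are only used by the oracle; algorithms see only views.\<close>
record pgraph =
  pn  :: nat
  pdeg :: "nat \<Rightarrow> nat"
  pnb :: "nat \<Rightarrow> nat \<Rightarrow> nat"

definition rport :: "pgraph \<Rightarrow> nat \<Rightarrow> nat \<Rightarrow> nat" where
  "rport G v p = (THE q. q < pdeg G (pnb G v p) \<and> pnb G (pnb G v p) q = v)"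

definition edge_rel :: "pgraph \<Rightarrow> (nat \<times> nat) set" where
  "edge_rel G = {(v, pnb G v p) | v p. v < pn G \<and> p < pdeg G v}"

definition valid_graph :: "pgraph \<Rightarrow> bool" where
  "valid_graph G \<longleftrightarrow>
     pn G \<ge> 3 \<and>
     (\<forall>v < pn G. \<forall>p < pdeg G v.
        pnb G v p < pn G \<and> pnb G v p \<noteq> v \<and>
        (\<exists>q < pdeg G (pnb G v p). pnb G (pnb G v p) q = v)) \<and>
     (\<forall>v < pn G. inj_on (pnb G v) {..<pdeg G v}) \<and>
     (\<forall>u < pn G. \<forall>v < pn G. (u, v) \<in> (edge_rel G)\<^sup>*)"

text \<open>A leaf carries the degree (in G) of the node it
  represents; an inner node carries, ordered by the port at its own side, the list
  of its children together with the two port numbers of the connecting edge.\<close>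
datatype vtree = VLeaf nat | VNode "(nat \<times> nat \<times> vtree) list"

fun aview :: "pgraph \<Rightarrow> nat \<Rightarrow> nat \<Rightarrow> vtree" where
  "aview G 0 v = VLeaf (pdeg G v)"
| "aview G (Suc l) v =
     VNode (map (\<lambda>p. (p, rport G v p, aview G l (pnb G v p))) [0..<pdeg G v])"

definition feasible :: "pgraph \<Rightarrow> bool" where
  "feasible G \<longleftrightarrow> (\<exists>l. inj_on (aview G l) {..<pn G})"

definition election_index :: "pgraph \<Rightarrow> nat" where
  "election_index G = (LEAST l. inj_on (aview G l) {..<pn G})"

fun follow :: "pgraph \<Rightarrow> nat \<Rightarrow> nat list \<Rightarrow> nat list option" where
  "follow G v [] = Some [v]"
| "follow G v [p] = None"
| "follow G v (p # q # rest) =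
     (if p < pdeg G v \<and> rport G v p = q
      then map_option (Cons v) (follow G (pnb G v p) rest) else None)"

text \<open>A deterministic algorithm with advice: in round r, node v outputs
  A adv (B^r(v)) if this is Some, and None means "no output yet".
  The output of v is given at the first round where the value is Some.\<close>
type_synonym algorithm = "bool list \<Rightarrow> vtree \<Rightarrow> nat list option"

definition elects_in_time :: "algorithm \<Rightarrow> bool list \<Rightarrow> pgraph \<Rightarrow> nat \<Rightarrow> bool" where
  "elects_in_time A adv G t \<longleftrightarrow>
     (\<exists>ldr < pn G. \<forall>v < pn G. \<exists>r \<le> t.
        A adv (aview G r v) \<noteq> None \<and>
        (\<forall>r' < r. A adv (aview G r' v) = None) \<and>
        (\<exists>xs. follow G v (the (A adv (aview G r v))) = Some xs \<and>
              distinct xs \<and> last xs = ldr))"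

end

theory Submission
  imports Defs
begin

text \<open>The views of depth l partition the nodes, each partition refines the previous one,
  and the partition at depth \<phi> is discrete. Name each class by its least node. The
  name at depth l + 1 is determined by the name at depth l together with the signature
  (far-end ports and depth-l names of the neighbours), and the advice describes this
  map by a list of tests "name k, signature entry (a, b) at position p", each of which
  splits off one new class. Classes are never merged, so all tests together introduce
  fewer than n new names and cost O(n log n) bits, as does a breadth-first tree towards
  node 0 (three numbers per node). After \<phi> rounds every node evaluates the tests
  depth by depth on its view, thereby learns its own name, and outputs its tree path to
  node 0.\<close>

section \<open>Partitions named by least elements, and their refinement\<close>

definition class_min :: "'a::linorder set \<Rightarrow> ('a \<Rightarrow> 'b) \<Rightarrow> 'a \<Rightarrow> 'a" where
  "class_min V f v = Min {u \<in> V. f u = f v}"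

lemma class_min_mem:
  assumes "finite V" "v \<in> V"
  shows "class_min V f v \<in> V \<and> f (class_min V f v) = f v"
proof -
  have "Min {u \<in> V. f u = f v} \<in> {u \<in> V. f u = f v}"
    using assms by (intro Min_in) auto
  then show ?thesis unfolding class_min_def by simp
qed

lemma class_min_le:
  assumes "finite V" "u \<in> V" "f u = f v"
  shows "class_min V f v \<le> u"
  unfolding class_min_def using assms by (intro Min_le) auto

lemma class_min_eqI:
  assumes "finite V" "w \<in> V" "f w = f v" "\<And>u. u \<in> V \<Longrightarrow> f u = f v \<Longrightarrow> w \<le> u"
  shows "class_min V f v = w"
  unfolding class_min_def using assms by (intro Min_eqI) auto

lemma class_min_cong:
  assumes "\<And>u. u \<in> V \<Longrightarrow> f u = f v \<longleftrightarrow> g u = g v"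
  shows "class_min V f v = class_min V g v"
proof -
  have "{u \<in> V. f u = f v} = {u \<in> V. g u = g v}" using assms by blast
  then show ?thesis unfolding class_min_def by simp
qed

lemma class_min_eq_iff:
  assumes "finite V" "u \<in> V" "v \<in> V"
  shows "class_min V f u = class_min V f v \<longleftrightarrow> f u = f v"
proof
  assume "class_min V f u = class_min V f v"
  then show "f u = f v" using class_min_mem[OF assms(1,2)] class_min_mem[OF assms(1,3)] by metis
qed (simp add: class_min_def)

text \<open>Least labellings are the canonical representations of partitions of V.\<close>
definition least_labelling :: "'a::linorder set \<Rightarrow> ('a \<Rightarrow> 'a) \<Rightarrow> bool" where
  "least_labelling V c \<longleftrightarrow> (\<forall>v \<in> V. class_min V c v = c v)"

definition refines :: "'a set \<Rightarrow> ('a \<Rightarrow> 'b) \<Rightarrow> ('a \<Rightarrow> 'c) \<Rightarrow> bool" where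
  "refines V f g \<longleftrightarrow> (\<forall>u \<in> V. \<forall>v \<in> V. f u = f v \<longrightarrow> g u = g v)"

lemma least_labelling_class_min:
  assumes "finite V"
  shows "least_labelling V (class_min V f)"
  unfolding least_labelling_def
proof
  fix v assume v: "v \<in> V"
  show "class_min V (class_min V f) v = class_min V f v"
    using class_min_eq_iff[OF assms _ v] by (intro class_min_cong) blast
qed

lemma least_labellingD:
  assumes "finite V" "least_labelling V c" "v \<in> V"
  shows "c v \<in> V" "c (c v) = c v" "u \<in> V \<Longrightarrow> c u = c v \<Longrightarrow> c v \<le> u"
proof -
  have eq: "class_min V c v = c v" using assms(2,3) unfolding least_labelling_def by blast
  show "c v \<in> V" "c (c v) = c v" using class_min_mem[OF assms(1,3), of c] unfolding eq by auto
  show "u \<in> V \<Longrightarrow> c u = c v \<Longrightarrow> c v \<le> u" using class_min_le[OF assms(1), of u c v] unfolding eq .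
qed

definition split_off :: "'a::linorder set \<Rightarrow> ('a \<Rightarrow> 'a) \<Rightarrow> 'a \<Rightarrow> 'a" where
  "split_off S c u = (if u \<in> S then Min S else c u)"

context
  fixes V S :: "'a::linorder set" and c :: "'a \<Rightarrow> 'a" and k :: 'a
  assumes fin: "finite V" and c: "least_labelling V c"
    and part: "S \<subseteq> {u \<in> V. c u = k}" "S \<noteq> {}" "k \<notin> S"
begin

lemma Min_split_part: "Min S \<in> S" "Min S \<in> V" "u \<in> S \<Longrightarrow> Min S \<le> u"
proof -
  have "S \<subseteq> V" using part(1) by blast
  then have "finite S" using fin by (rule finite_subset)
  then show "Min S \<in> S" "u \<in> S \<Longrightarrow> Min S \<le> u" using part(2) by auto
  then show "Min S \<in> V" using \<open>S \<subseteq> V\<close> by blast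
qed

lemma label_not_in_split_part: "v \<in> V \<Longrightarrow> c v \<notin> S"
proof
  assume v: "v \<in> V" and cv: "c v \<in> S"
  then have "c (c v) = k" using part(1) by blast
  then show False using least_labellingD(2)[OF fin c v] cv part(3) by simp
qed

lemma split_off_new_label: "Min S \<notin> c ` V"
proof
  assume "Min S \<in> c ` V"
  then obtain v where "v \<in> V" "Min S = c v" by blast
  then show False using label_not_in_split_part Min_split_part(1) by metis
qed

lemma least_labelling_split_off: "least_labelling V (split_off S c)"
  unfolding least_labelling_def
proof
  fix v assume v: "v \<in> V"
  show "class_min V (split_off S c) v = split_off S c v"
  proof (cases "v \<in> S")
    case True
    have in_S: "split_off S c u = split_off S c v \<longleftrightarrow> u \<in> S" if "u \<in> V" for u
      using True split_off_new_label that unfolding split_off_def by (cases "u \<in> S") (auto simp: image_iff)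
    have "class_min V (split_off S c) v = Min S"
    proof (rule class_min_eqI[OF fin])
      show "Min S \<in> V" by (rule Min_split_part(2))
      show "split_off S c (Min S) = split_off S c v"
        using Min_split_part(1) True unfolding split_off_def by simp
      show "Min S \<le> u" if "u \<in> V" "split_off S c u = split_off S c v" for u
        using in_S[OF that(1)] that(2) Min_split_part(3) by blast
    qed
    then show ?thesis using True unfolding split_off_def by simp
  next
    case False
    have "class_min V (split_off S c) v = c v"
    proof (rule class_min_eqI[OF fin])
      show "c v \<in> V" "split_off S c (c v) = split_off S c v"
        using least_labellingD[OF fin c v] label_not_in_split_part[OF v] False
        unfolding split_off_def by auto
      show "c v \<le> u" if "u \<in> V" "split_off S c u = split_off S c v" for u
      proof (cases "u \<in> S")
        case True
        then show ?thesis using that v False split_off_new_label unfolding split_off_def by auto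
      next
        case False
        then show ?thesis
          using that \<open>v \<notin> S\<close> least_labellingD(3)[OF fin c v] unfolding split_off_def by simp
      qed
    qed
    then show ?thesis using False unfolding split_off_def by simp
  qed
qed

lemma split_off_image: "insert (Min S) (c ` V) \<subseteq> split_off S c ` V"
proof -
  have "c v \<in> split_off S c ` V" if "v \<in> V" for v
  proof -
    have "c v = split_off S c (c v)"
      using least_labellingD(2)[OF fin c that] label_not_in_split_part[OF that]
      unfolding split_off_def by simp
    then show ?thesis using least_labellingD(1)[OF fin c that] by blast
  qed
  moreover have "Min S = split_off S c (Min S)" using Min_split_part(1) unfolding split_off_def by simp
  then have "Min S \<in> split_off S c ` V" using Min_split_part(2) by blast
  ultimately show ?thesis by blast
qed

end

definition saturated :: "'a set \<Rightarrow> ('a \<Rightarrow> 'b) \<Rightarrow> 'a set \<Rightarrow> bool" where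
  "saturated V s S \<longleftrightarrow> (\<forall>u \<in> V. \<forall>w \<in> S. s u = s w \<longrightarrow> u \<in> S)"

lemma class_min_Min_saturated:
  assumes "finite V" "S \<subseteq> V" "S \<noteq> {}" "saturated V s S"
  shows "class_min V s (Min S) = Min S"
proof -
  have "finite S" using assms(2,1) by (rule finite_subset)
  then have "Min S \<in> S" "\<And>u. u \<in> S \<Longrightarrow> Min S \<le> u" using assms(3) by auto
  then show ?thesis using assms unfolding saturated_def by (intro class_min_eqI) auto
qed

lemma refines_split_off:
  assumes "refines V s c" "saturated V s S" "S \<subseteq> V"
  shows "refines V s (split_off S c)"
  using assms unfolding refines_def saturated_def split_off_def by (metis subsetD)

text \<open>An entry [k, p, a, b, f, t] relabels a node with label k to t iff the test "its
  signature has entry (a, b) at position p" has outcome f (encoded as 1 for true).\<close>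
definition refine_step :: "(nat \<times> nat) list \<Rightarrow> nat \<Rightarrow> nat list \<Rightarrow> nat" where
  "refine_step sg c e =
     (if e!0 = c \<and> (e!1 < length sg \<and> sg!(e!1) = (e!2, e!3)) = (e!4 = 1) then e!5 else c)"

definition refine_run :: "nat list list \<Rightarrow> nat \<Rightarrow> (nat \<times> nat) list \<Rightarrow> nat" where
  "refine_run es c sg = foldl (refine_step sg) c es"

lemma refine_run_simps [simp]:
  "refine_run [] c sg = c"
  "refine_run (e # es) c sg = refine_run es (refine_step sg c e) sg"
  by (simp_all add: refine_run_def)

lemma nth_distinguishes_lists:
  assumes "xs \<noteq> ys"
  shows "\<exists>p a. (p < length xs \<and> xs!p = a) \<noteq> (p < length ys \<and> ys!p = a)"
proof (cases "length xs = length ys")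
  case True
  then obtain p where "p < length xs" "xs!p \<noteq> ys!p" using assms list_eq_iff_nth_eq by blast
  then show ?thesis using True by blast
next
  case False
  then consider "length xs < length ys" | "length ys < length xs" by linarith
  then show ?thesis by cases blast+
qed

definition signatures_bounded :: "nat set \<Rightarrow> nat \<Rightarrow> (nat \<Rightarrow> (nat \<times> nat) list) \<Rightarrow> bool" where
  "signatures_bounded V B s \<longleftrightarrow>
     (\<forall>v \<in> V. length (s v) \<le> B \<and> (\<forall>(a, b) \<in> set (s v). a < B \<and> b < B))"

lemma refine_step_exists:
  assumes fin: "finite V" and VB: "V \<subseteq> {..<B}" and B: "2 \<le> B"
    and sB: "signatures_bounded V B s"
    and cur: "least_labelling V cur" and ref: "refines V s cur" and split: "\<not> refines V cur s"
  obtains e cur' where "length e = 6" "set e \<subseteq> {..<B}"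
    "\<forall>v \<in> V. refine_step (s v) (cur v) e = cur' v"
    "least_labelling V cur'" "refines V s cur'"
    "e!5 \<in> class_min V s ` V" "e!5 \<notin> cur ` V" "insert (e!5) (cur ` V) \<subseteq> cur' ` V"
proof -
  obtain x y where xy: "x \<in> V" "y \<in> V" "cur x = cur y" "s x \<noteq> s y"
    using split unfolding refines_def by blast
  obtain p a b where pab: "(p < length (s x) \<and> s x!p = (a, b)) \<noteq> (p < length (s y) \<and> s y!p = (a, b))"
    using nth_distinguishes_lists[OF xy(4)] by auto
  define tst where "tst u \<longleftrightarrow> p < length (s u) \<and> s u!p = (a, b)" for u
  define k where "k = cur x"
  define bb where "bb \<longleftrightarrow> \<not> tst k"
  \<comment> \<open>Of the two parts into which the test splits the class of x, the one avoiding the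
    label k receives a new label.\<close>
  define S where "S = {u \<in> V. cur u = k \<and> tst u = bb}"
  have "tst x \<noteq> tst y" using pab unfolding tst_def by simp
  then have "x \<in> S \<or> y \<in> S" using xy unfolding S_def k_def bb_def by auto
  then have S: "S \<subseteq> {u \<in> V. cur u = k}" "S \<noteq> {}" "k \<notin> S"
    unfolding S_def bb_def by auto
  have sat: "saturated V s S"
    unfolding saturated_def
  proof (intro ballI impI)
    fix u w assume "u \<in> V" "w \<in> S" "s u = s w"
    moreover have "cur u = cur w" using ref calculation unfolding refines_def S_def by blast
    moreover have "tst u = tst w" using \<open>s u = s w\<close> unfolding tst_def by simp
    ultimately show "u \<in> S" unfolding S_def by simp
  qed
  define e where "e = [k, p, a, b, if bb then 1 else 0, Min S]"
  have e: "e!0 = k" "e!1 = p" "e!2 = a" "e!3 = b" "e!4 = 1 \<longleftrightarrow> bb" "e!5 = Min S"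
    unfolding e_def by simp_all
  show ?thesis
  proof (rule that)
    show "length e = 6" unfolding e_def by simp
    obtain z where z: "z \<in> V" "tst z" using \<open>tst x \<noteq> tst y\<close> xy by blast
    then have "(a, b) \<in> set (s z)" "p < length (s z)" unfolding tst_def by (metis nth_mem)+
    moreover have "length (s z) \<le> B" "\<forall>(a', b') \<in> set (s z). a' < B \<and> b' < B"
      using sB z(1) unfolding signatures_bounded_def by auto
    ultimately have "p < B \<and> a < B \<and> b < B" by auto
    moreover have "k \<in> V" unfolding k_def using least_labellingD(1)[OF fin cur xy(1)] .
    ultimately show "set e \<subseteq> {..<B}" using B VB Min_split_part(2)[OF fin cur S] unfolding e_def by auto
    have "refine_step (s v) (cur v) e = (if k = cur v \<and> tst v = bb then Min S else cur v)" for v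
      unfolding refine_step_def tst_def e by simp
    then show "\<forall>v \<in> V. refine_step (s v) (cur v) e = split_off S cur v"
      unfolding split_off_def S_def by auto
    show "least_labelling V (split_off S cur)" by (rule least_labelling_split_off[OF fin cur S])
    show "refines V s (split_off S cur)" using refines_split_off[OF ref sat] S(1) by blast
    have "class_min V s (Min S) = Min S"
      using class_min_Min_saturated[OF fin _ S(2) sat] S(1) by blast
    then show "e!5 \<in> class_min V s ` V" using Min_split_part(2)[OF fin cur S] e(6) by (metis image_eqI)
    show "e!5 \<notin> cur ` V" "insert (e!5) (cur ` V) \<subseteq> split_off S cur ` V"
      using split_off_new_label[OF fin cur S] split_off_image[OF fin cur S] e(6) by simp_all
  qed
qed

lemma least_labelling_eq_class_min:
  assumes "least_labelling V c" "refines V s c" "refines V c s" "v \<in> V"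
  shows "c v = class_min V s v"
proof -
  have "class_min V c v = class_min V s v"
    using assms(2-4) unfolding refines_def by (intro class_min_cong) blast
  then show ?thesis using assms(1,4) unfolding least_labelling_def by simp
qed

text \<open>The new labels are pairwise distinct, which bounds the length of a program by
  the number of new classes.\<close>
lemma refinement_program_exists:
  assumes fin: "finite V" and VB: "V \<subseteq> {..<B}" and B: "2 \<le> B"
    and sB: "signatures_bounded V B s"
  shows "least_labelling V cur \<Longrightarrow> refines V s cur \<Longrightarrow>
    \<exists>es. (\<forall>e \<in> set es. length e = 6 \<and> set e \<subseteq> {..<B}) \<and>
      (\<forall>v \<in> V. refine_run es (cur v) (s v) = class_min V s v) \<and>
      distinct (map (\<lambda>e. e!5) es) \<and> set (map (\<lambda>e. e!5) es) \<subseteq> class_min V s ` V - cur ` V"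
proof (induction "card (class_min V s ` V - cur ` V)" arbitrary: cur rule: less_induct)
  case (less cur)
  show ?case
  proof (cases "refines V cur s")
    case True
    then show ?thesis
      using least_labelling_eq_class_min[OF less.prems] by (intro exI[of _ "[]"]) simp
  next
    case False
    obtain e cur' where e: "length e = 6" "set e \<subseteq> {..<B}"
      "\<forall>v \<in> V. refine_step (s v) (cur v) e = cur' v"
      "least_labelling V cur'" "refines V s cur'"
      "e!5 \<in> class_min V s ` V" "e!5 \<notin> cur ` V" "insert (e!5) (cur ` V) \<subseteq> cur' ` V"
      using refine_step_exists[OF fin VB B sB less.prems False] by blast
    let ?F = "class_min V s ` V"
    have "?F - cur' ` V \<subseteq> (?F - cur ` V) - {e!5}" using e(8) by blast
    moreover have "finite (?F - cur ` V)" using fin by simp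
    moreover have "e!5 \<in> ?F - cur ` V" using e(6,7) by blast
    ultimately have "card (?F - cur' ` V) < card (?F - cur ` V)"
      by (meson card_Diff1_less card_mono finite_Diff le_less_trans)
    then obtain es where es: "\<forall>e \<in> set es. length e = 6 \<and> set e \<subseteq> {..<B}"
      "\<forall>v \<in> V. refine_run es (cur' v) (s v) = class_min V s v"
      "distinct (map (\<lambda>e. e!5) es)" "set (map (\<lambda>e. e!5) es) \<subseteq> ?F - cur' ` V"
      using less.hyps e(4,5) by blast
    show ?thesis
    proof (intro exI[of _ "e # es"] conjI)
      show "\<forall>v \<in> V. refine_run (e # es) (cur v) (s v) = class_min V s v" using e(3) es(2) by simp
      show "distinct (map (\<lambda>e. e!5) (e # es))" using es(3,4) e(8) by auto
      have "cur ` V \<subseteq> cur' ` V" using e(8) by blast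
      then show "set (map (\<lambda>e. e!5) (e # es)) \<subseteq> ?F - cur ` V" using es(4) e(6,7) by auto
    qed (use e(1,2) es(1) in auto)
  qed
qed

section \<open>Views\<close>

context
  fixes G :: pgraph
  assumes valid: "valid_graph G"
begin

lemma pn_ge_3: "3 \<le> pn G"
  using valid unfolding valid_graph_def by simp

lemma pnb_less: "v < pn G \<Longrightarrow> p < pdeg G v \<Longrightarrow> pnb G v p < pn G"
  using valid unfolding valid_graph_def by blast

lemma rport_props:
  assumes "v < pn G" "p < pdeg G v"
  shows "rport G v p < pdeg G (pnb G v p) \<and> pnb G (pnb G v p) (rport G v p) = v"
proof -
  let ?w = "pnb G v p"
  obtain q where q: "q < pdeg G ?w" "pnb G ?w q = v"
    using valid assms unfolding valid_graph_def by blast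
  have "inj_on (pnb G ?w) {..<pdeg G ?w}"
    using valid pnb_less[OF assms] unfolding valid_graph_def by blast
  then have "\<exists>!q. q < pdeg G ?w \<and> pnb G ?w q = v"
    using q by (metis inj_onD lessThan_iff)
  then show ?thesis unfolding rport_def by (rule theI')
qed

lemma pdeg_le_pn:
  assumes "v < pn G"
  shows "pdeg G v \<le> pn G"
proof -
  have "inj_on (pnb G v) {..<pdeg G v}" using valid assms unfolding valid_graph_def by blast
  moreover have "pnb G v ` {..<pdeg G v} \<subseteq> {..<pn G}" using pnb_less assms by auto
  ultimately have "card {..<pdeg G v} \<le> card {..<pn G}" by (intro card_inj_on_le) auto
  then show ?thesis by simp
qed

lemma pdeg_pos:
  assumes "v < pn G"
  shows "0 < pdeg G v"
proof -
  define u where "u = (if v = 0 then 1 else 0 :: nat)"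
  have u: "u < pn G" "u \<noteq> v" using pn_ge_3 unfolding u_def by auto
  have "(v, u) \<in> (edge_rel G)\<^sup>*" using valid assms u(1) unfolding valid_graph_def by blast
  then obtain y where "(v, y) \<in> edge_rel G" using u(2) by (metis converse_rtranclE)
  then show ?thesis unfolding edge_rel_def by auto
qed

end

fun tdeg :: "vtree \<Rightarrow> nat" where
  "tdeg (VLeaf d) = d"
| "tdeg (VNode ch) = length ch"

fun trunc :: "nat \<Rightarrow> vtree \<Rightarrow> vtree" where
  "trunc 0 T = VLeaf (tdeg T)"
| "trunc (Suc l) (VLeaf d) = VLeaf d"
| "trunc (Suc l) (VNode ch) = VNode (map (\<lambda>(p, q, t). (p, q, trunc l t)) ch)"

fun tdepth :: "vtree \<Rightarrow> nat" where
  "tdepth (VLeaf d) = 0"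
| "tdepth (VNode []) = 0"
| "tdepth (VNode ((p, q, t) # rest)) = Suc (tdepth t)"

lemma tdeg_aview: "tdeg (aview G l v) = pdeg G v"
  by (cases l) auto

lemma trunc_aview: "k \<le> l \<Longrightarrow> trunc k (aview G l v) = aview G k v"
proof (induction k arbitrary: l v)
  case 0
  then show ?case by (simp add: tdeg_aview)
next
  case (Suc k)
  then obtain l' where "l = Suc l'" "k \<le> l'" by (cases l) auto
  then show ?case using Suc.IH by simp
qed

lemma aview_eq_le: "k \<le> l \<Longrightarrow> aview G l u = aview G l v \<Longrightarrow> aview G k u = aview G k v"
  by (metis trunc_aview)

lemma map_upt_eq_iff: "map f [0..<a] = map g [0..<b] \<longleftrightarrow> a = b \<and> (\<forall>p < a. f p = g p)"
proof
  assume eq: "map f [0..<a] = map g [0..<b]"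
  then have "a = b" by (metis length_map length_upt minus_nat.diff_0)
  moreover have "f p = g p" if "p < a" for p
    using arg_cong[OF eq, of "\<lambda>xs. xs ! p"] that \<open>a = b\<close> by simp
  ultimately show "a = b \<and> (\<forall>p < a. f p = g p)" by blast
qed simp

lemma aview_eq_Suc_iff:
  "aview G (Suc l) u = aview G (Suc l) v \<longleftrightarrow>
     pdeg G u = pdeg G v \<and>
     (\<forall>p < pdeg G u. rport G u p = rport G v p \<and> aview G l (pnb G u p) = aview G l (pnb G v p))"
  by (simp add: map_upt_eq_iff)

lemma tdepth_aview:
  assumes "valid_graph G" "v < pn G"
  shows "tdepth (aview G l v) = l"
  using assms(2)
proof (induction l arbitrary: v)
  case (Suc l)
  have "0 < pdeg G v" using pdeg_pos[OF assms(1) Suc.prems] .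
  then have "[0..<pdeg G v] = 0 # [1..<pdeg G v]" by (simp add: upt_conv_Cons)
  then show ?case using Suc.IH[OF pnb_less[OF assms(1) Suc.prems \<open>0 < pdeg G v\<close>]] by simp
qed simp

text \<open>What nodes compute locally from the advice; at depth election_index G it is the
  node itself.\<close>
definition view_rep :: "pgraph \<Rightarrow> nat \<Rightarrow> nat \<Rightarrow> nat" where
  "view_rep G l = class_min {..<pn G} (aview G l)"

fun level_sig :: "pgraph \<Rightarrow> nat \<Rightarrow> nat \<Rightarrow> (nat \<times> nat) list" where
  "level_sig G 0 v = [(pdeg G v, 0)]"
| "level_sig G (Suc l) v = map (\<lambda>p. (rport G v p, view_rep G l (pnb G v p))) [0..<pdeg G v]"

fun prev_rep :: "pgraph \<Rightarrow> nat \<Rightarrow> nat \<Rightarrow> nat" where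
  "prev_rep G 0 v = 0"
| "prev_rep G (Suc l) v = view_rep G l v"

context
  fixes G :: pgraph
  assumes valid: "valid_graph G"
begin

lemma view_rep_props:
  assumes "v < pn G"
  shows "view_rep G l v < pn G" "aview G l (view_rep G l v) = aview G l v"
  using class_min_mem[of "{..<pn G}" v "aview G l"] assms unfolding view_rep_def by auto

lemma view_rep_eq_iff:
  "u < pn G \<Longrightarrow> v < pn G \<Longrightarrow> view_rep G l u = view_rep G l v \<longleftrightarrow> aview G l u = aview G l v"
  unfolding view_rep_def by (simp add: class_min_eq_iff)

lemma level_sig_eq_iff:
  assumes "u < pn G" "v < pn G"
  shows "level_sig G l u = level_sig G l v \<longleftrightarrow> aview G l u = aview G l v"
proof (cases l)
  case (Suc k)
  have "level_sig G l u = level_sig G l v \<longleftrightarrow> pdeg G u = pdeg G v \<and>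
    (\<forall>p < pdeg G u. rport G u p = rport G v p \<and>
       view_rep G k (pnb G u p) = view_rep G k (pnb G v p))"
    unfolding Suc by (simp add: map_upt_eq_iff)
  also have "\<dots> \<longleftrightarrow> aview G l u = aview G l v"
  proof -
    have "pdeg G u = pdeg G v \<Longrightarrow> p < pdeg G u \<Longrightarrow>
      view_rep G k (pnb G u p) = view_rep G k (pnb G v p) \<longleftrightarrow>
      aview G k (pnb G u p) = aview G k (pnb G v p)" for p
      using view_rep_eq_iff pnb_less[OF valid] assms by simp
    then show ?thesis unfolding Suc aview_eq_Suc_iff by blast
  qed
  finally show ?thesis .
qed simp

lemma class_min_level_sig:
  "v < pn G \<Longrightarrow> class_min {..<pn G} (level_sig G l) v = view_rep G l v"
  unfolding view_rep_def using level_sig_eq_iff by (intro class_min_cong) simp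

lemma least_labelling_prev_rep: "least_labelling {..<pn G} (prev_rep G l)"
proof (cases l)
  case 0
  have "class_min {..<pn G} (\<lambda>_. 0::nat) v = 0" for v
    using pn_ge_3[OF valid] by (intro class_min_eqI) auto
  moreover have "prev_rep G 0 = (\<lambda>_. 0)" by auto
  ultimately show ?thesis unfolding 0 least_labelling_def by simp
next
  case (Suc k)
  have "prev_rep G l = view_rep G k" unfolding Suc by auto
  then show ?thesis unfolding view_rep_def by (simp add: least_labelling_class_min)
qed

lemma refines_level_sig_prev_rep: "refines {..<pn G} (level_sig G l) (prev_rep G l)"
proof (cases l)
  case (Suc k)
  show ?thesis unfolding refines_def
  proof (intro ballI impI)
    fix u v assume uv: "u \<in> {..<pn G}" "v \<in> {..<pn G}" "level_sig G l u = level_sig G l v"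
    then have "aview G l u = aview G l v" using level_sig_eq_iff by simp
    then have "aview G k u = aview G k v" by (rule aview_eq_le[rotated]) (simp add: Suc)
    then show "prev_rep G l u = prev_rep G l v" using view_rep_eq_iff uv(1,2) Suc by simp
  qed
qed (simp add: refines_def)

lemma signatures_bounded_level_sig: "signatures_bounded {..<pn G} (pn G + 1) (level_sig G l)"
proof -
  have "length (level_sig G l v) \<le> pn G + 1 \<and> (\<forall>(a, b) \<in> set (level_sig G l v). a < pn G + 1 \<and> b < pn G + 1)"
    if v: "v < pn G" for v
  proof (cases l)
    case 0
    then show ?thesis using pdeg_le_pn[OF valid v] by simp
  next
    case (Suc k)
    have "rport G v p < pn G + 1 \<and> view_rep G k (pnb G v p) < pn G + 1" if "p < pdeg G v" for p
      using rport_props[OF valid v that] pdeg_le_pn[OF valid pnb_less[OF valid v that]]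
        view_rep_props(1)[OF pnb_less[OF valid v that], of k] by simp
    moreover have "length (level_sig G l v) \<le> pn G + 1" using pdeg_le_pn[OF valid v] Suc by simp
    ultimately show ?thesis unfolding Suc level_sig.simps set_map by auto
  qed
  then show ?thesis unfolding signatures_bounded_def by simp
qed

lemma view_rep_fixed_Suc:
  assumes "m < pn G" "view_rep G k m = m"
  shows "view_rep G (Suc k) m = m"
proof -
  let ?c = "view_rep G (Suc k) m"
  have c: "?c < pn G" "aview G (Suc k) ?c = aview G (Suc k) m"
    using view_rep_props[OF assms(1), of "Suc k"] by blast+
  have "?c \<le> m" unfolding view_rep_def using assms(1) by (intro class_min_le) auto
  moreover have "aview G k ?c = aview G k m" using aview_eq_le[OF le_SucI[OF order_refl] c(2)] .
  then have "m \<le> ?c" using assms c(1) unfolding view_rep_def by (metis class_min_le finite_lessThan lessThan_iff)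
  ultimately show ?thesis by simp
qed

lemma view_rep_image_mono:
  assumes "k \<le> l"
  shows "view_rep G k ` {..<pn G} \<subseteq> view_rep G l ` {..<pn G}"
  using assms
proof (induction l rule: dec_induct)
  case (step l)
  have "view_rep G l ` {..<pn G} \<subseteq> view_rep G (Suc l) ` {..<pn G}"
  proof
    fix m assume "m \<in> view_rep G l ` {..<pn G}"
    then obtain x where x: "x < pn G" "m = view_rep G l x" by auto
    have "least_labelling {..<pn G} (view_rep G l)"
      unfolding view_rep_def by (simp add: least_labelling_class_min)
    then have m: "m < pn G" "view_rep G l m = m"
      using least_labellingD(1,2)[of "{..<pn G}" "view_rep G l" x] x by auto
    show "m \<in> view_rep G (Suc l) ` {..<pn G}"
      using view_rep_fixed_Suc[OF m] m(1) by (metis imageI lessThan_iff)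
  qed
  then show ?case using step.IH by blast
qed simp

end

definition level_program :: "nat list list \<Rightarrow> nat \<Rightarrow> nat list list" where
  "level_program es l = map tl (filter (\<lambda>e. hd e = l) es)"

definition tag_programs :: "(nat \<Rightarrow> nat list list) \<Rightarrow> nat \<Rightarrow> nat list list" where
  "tag_programs E N = concat (map (\<lambda>l. map (Cons l) (E l)) [0..<N])"

lemma level_program_tag_programs:
  "level_program (tag_programs E N) l = (if l < N then E l else [])"
proof (induction N)
  case (Suc N)
  have "map tl (filter (\<lambda>e. hd e = l) (map (Cons N) X)) = (if l = N then X else [])" for X
    by (induction X) auto
  then show ?case using Suc.IH unfolding level_program_def tag_programs_def by auto
qed (simp add: level_program_def tag_programs_def)

fun local_label :: "nat list list \<Rightarrow> nat \<Rightarrow> vtree \<Rightarrow> nat" where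
  "local_label es 0 T = refine_run (level_program es 0) 0 [(tdeg T, 0)]"
| "local_label es (Suc l) T =
     refine_run (level_program es (Suc l)) (local_label es l (trunc l T))
       (case T of VLeaf d \<Rightarrow> [] | VNode ch \<Rightarrow> map (\<lambda>(p, q, t). (q, local_label es l t)) ch)"

lemma local_label_aview:
  assumes valid: "valid_graph G"
    and programs: "\<And>k v. k \<le> l \<Longrightarrow> v < pn G \<Longrightarrow>
      refine_run (level_program es k) (prev_rep G k v) (level_sig G k v) = view_rep G k v"
  shows "v < pn G \<Longrightarrow> local_label es l (aview G l v) = view_rep G l v"
  using programs
proof (induction l arbitrary: v)
  case 0
  then show ?case using "0.prems"(2)[of 0 v] by simp
next
  case (Suc l)
  have IH: "local_label es l (aview G l u) = view_rep G l u" if "u < pn G" for u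
    using Suc.IH[OF that] Suc.prems(2) by simp
  have children: "(case aview G (Suc l) v of VLeaf d \<Rightarrow> []
      | VNode ch \<Rightarrow> map (\<lambda>(p, q, t). (q, local_label es l t)) ch) = level_sig G (Suc l) v"
  proof -
    have "(case aview G (Suc l) v of VLeaf d \<Rightarrow> []
      | VNode ch \<Rightarrow> map (\<lambda>(p, q, t). (q, local_label es l t)) ch)
      = map (\<lambda>p. (rport G v p, local_label es l (aview G l (pnb G v p)))) [0..<pdeg G v]"
      by (simp add: comp_def)
    also have "\<dots> = level_sig G (Suc l) v"
      using IH pnb_less[OF valid Suc.prems(1)] by simp
    finally show ?thesis .
  qed
  have "local_label es (Suc l) (aview G (Suc l) v) =
    refine_run (level_program es (Suc l)) (local_label es l (trunc l (aview G (Suc l) v)))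
      (case aview G (Suc l) v of VLeaf d \<Rightarrow> []
       | VNode ch \<Rightarrow> map (\<lambda>(p, q, t). (q, local_label es l t)) ch)"
    by (simp only: local_label.simps)
  also have "\<dots> = refine_run (level_program es (Suc l)) (prev_rep G (Suc l) v) (level_sig G (Suc l) v)"
    unfolding children trunc_aview[OF le_SucI[OF order_refl]] IH[OF Suc.prems(1)] by simp
  also have "\<dots> = view_rep G (Suc l) v" by (rule Suc.prems(2)) (simp_all add: Suc.prems(1))
  finally show ?case .
qed

definition views_stable :: "pgraph \<Rightarrow> nat \<Rightarrow> bool" where
  "views_stable G l \<longleftrightarrow>
     (\<forall>u < pn G. \<forall>v < pn G. aview G l u = aview G l v \<longrightarrow> aview G (Suc l) u = aview G (Suc l) v)"

context
  fixes G :: pgraph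
  assumes valid: "valid_graph G"
begin

lemma views_stable_Suc:
  assumes "views_stable G l"
  shows "views_stable G (Suc l)"
  unfolding views_stable_def
proof (intro allI impI)
  fix u v assume uv: "u < pn G" "v < pn G" and eq: "aview G (Suc l) u = aview G (Suc l) v"
  have deg: "pdeg G u = pdeg G v"
    and ch: "\<forall>p < pdeg G u. rport G u p = rport G v p \<and> aview G l (pnb G u p) = aview G l (pnb G v p)"
    using eq[unfolded aview_eq_Suc_iff] by blast+
  have "aview G (Suc l) (pnb G u p) = aview G (Suc l) (pnb G v p)" if "p < pdeg G u" for p
  proof -
    have "pnb G u p < pn G" "pnb G v p < pn G"
      using pnb_less[OF valid uv(1) that] pnb_less[OF valid uv(2), of p] that deg by simp_all
    moreover have "aview G l (pnb G u p) = aview G l (pnb G v p)" using ch that by blast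
    ultimately show ?thesis using assms[unfolded views_stable_def] by blast
  qed
  then show "aview G (Suc (Suc l)) u = aview G (Suc (Suc l)) v"
    using deg ch unfolding aview_eq_Suc_iff[of G "Suc l"] by blast
qed

lemma views_stable_mono:
  assumes "l \<le> k" "views_stable G l"
  shows "views_stable G k"
  using assms by (induction k rule: dec_induct) (simp_all add: views_stable_Suc)

lemma views_stable_eq:
  assumes "views_stable G l" "l \<le> k" "u < pn G" "v < pn G" "aview G l u = aview G l v"
  shows "aview G k u = aview G k v"
  using assms(2)
proof (induction k rule: dec_induct)
  case (step k)
  then show ?case using views_stable_mono[OF step.hyps(1) assms(1)] assms(3,4)
    unfolding views_stable_def by blast
qed (use assms(5) in simp)

context
  assumes feasible: "feasible G"
begin

lemma inj_on_aview_election_index: "inj_on (aview G (election_index G)) {..<pn G}"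
  using feasible unfolding feasible_def election_index_def
  by (rule LeastI_ex[where P = "\<lambda>l. inj_on (aview G l) {..<pn G}"])

lemma not_views_stable_below_election_index:
  assumes "l < election_index G"
  shows "\<not> views_stable G l"
proof
  assume stable: "views_stable G l"
  have "inj_on (aview G l) {..<pn G}"
  proof (rule inj_onI)
    fix u v assume uv: "u \<in> {..<pn G}" "v \<in> {..<pn G}" and eq: "aview G l u = aview G l v"
    have "aview G (election_index G) u = aview G (election_index G) v"
      using views_stable_eq[OF stable _ _ _ eq] assms uv by simp
    then show "u = v" using inj_onD[OF inj_on_aview_election_index] uv by blast
  qed
  moreover have "\<not> inj_on (aview G l) {..<pn G}"
    using assms unfolding election_index_def by (rule not_less_Least)
  ultimately show False by contradiction
qed

text \<open>Views of depth l are truncations of views of depth l + 1, and below the election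
  index the truncation is not injective on the views present in G.\<close>
lemma card_views_less:
  assumes "l < election_index G"
  shows "card (aview G l ` {..<pn G}) < card (aview G (Suc l) ` {..<pn G})"
proof -
  let ?A = "aview G (Suc l) ` {..<pn G}"
  have truncated: "aview G l ` {..<pn G} = trunc l ` ?A"
    by (simp only: image_image trunc_aview[OF le_SucI[OF order_refl]])
  obtain u v where uv: "u < pn G" "v < pn G" "aview G l u = aview G l v"
    "aview G (Suc l) u \<noteq> aview G (Suc l) v"
    using not_views_stable_below_election_index[OF assms] unfolding views_stable_def by blast
  have "\<not> inj_on (trunc l) ?A"
  proof
    assume "inj_on (trunc l) ?A"
    moreover have "trunc l (aview G (Suc l) u) = trunc l (aview G (Suc l) v)"
      using uv(3) by (simp only: trunc_aview[OF le_SucI[OF order_refl]])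
    moreover have "aview G (Suc l) u \<in> ?A" "aview G (Suc l) v \<in> ?A" using uv(1,2) by auto
    ultimately show False using uv(4) inj_onD by metis
  qed
  then have "card (trunc l ` ?A) \<noteq> card ?A" using inj_on_iff_eq_card[of ?A "trunc l"] by simp
  then show ?thesis unfolding truncated using card_image_le[of ?A "trunc l"] by simp
qed

lemma election_index_less_pn: "election_index G < pn G"
proof -
  have "l + 1 \<le> card (aview G l ` {..<pn G})" if "l \<le> election_index G" for l
    using that
  proof (induction l)
    case 0
    have "0 \<in> {..<pn G}" using pn_ge_3[OF valid] by simp
    then have "aview G 0 ` {..<pn G} \<noteq> {}" by blast
    then show ?case by (simp add: card_gt_0_iff Suc_le_eq)
  next
    case (Suc l)
    then show ?case using card_views_less[of l] by simp
  qed
  moreover have "card (aview G (election_index G) ` {..<pn G}) = pn G"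
    using card_image[OF inj_on_aview_election_index] by simp
  ultimately have "election_index G + 1 \<le> pn G" by (metis order_refl)
  then show ?thesis by simp
qed

lemma view_rep_election_index:
  assumes "v < pn G"
  shows "view_rep G (election_index G) v = v"
  using view_rep_props[OF valid assms, of "election_index G"] assms
    inj_onD[OF inj_on_aview_election_index] by simp

end

end

section \<open>A breadth-first tree towards node 0\<close>

definition gdist :: "pgraph \<Rightarrow> nat \<Rightarrow> nat" where
  "gdist G u = (LEAST k. (u, 0) \<in> edge_rel G ^^ k)"

definition parent_port :: "pgraph \<Rightarrow> nat \<Rightarrow> nat" where
  "parent_port G u = (SOME p. p < pdeg G u \<and> gdist G (pnb G u p) + 1 = gdist G u)"

text \<open>Row u holds the two ports of the edge from u to its parent in a breadth-first
  tree rooted at node 0, and the parent itself; the row of the root is a dummy.\<close>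
definition parent_table :: "pgraph \<Rightarrow> nat list list" where
  "parent_table G = map (\<lambda>u. if u = 0 then [0, 0, 0]
     else [parent_port G u, rport G u (parent_port G u), pnb G u (parent_port G u)]) [0..<pn G]"

fun walk_steps :: "nat list list \<Rightarrow> nat \<Rightarrow> nat \<Rightarrow> nat list" where
  "walk_steps tbl 0 u = []"
| "walk_steps tbl (Suc k) u = tbl!u!0 # tbl!u!1 # walk_steps tbl k (tbl!u!2)"

definition walk :: "nat list list \<Rightarrow> nat \<Rightarrow> nat list" where
  "walk tbl u = walk_steps tbl (LEAST k. ((\<lambda>x. tbl!x!2) ^^ k) u = 0) u"

abbreviation parent :: "pgraph \<Rightarrow> nat \<Rightarrow> nat" where
  "parent G x \<equiv> parent_table G ! x ! 2"

lemma follow_nonempty: "follow G v ps = Some xs \<Longrightarrow> xs \<noteq> []"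
  by (induction G v ps arbitrary: xs rule: follow.induct) (auto split: if_splits)

context
  fixes G :: pgraph
  assumes valid: "valid_graph G"
begin

lemma gdist_path:
  assumes "u < pn G"
  shows "(u, 0) \<in> edge_rel G ^^ gdist G u"
proof -
  have "(u, 0) \<in> (edge_rel G)\<^sup>*" using valid assms pn_ge_3[OF valid] unfolding valid_graph_def by auto
  then obtain k where "(u, 0) \<in> edge_rel G ^^ k" using rtrancl_power by blast
  then show ?thesis unfolding gdist_def by (rule LeastI)
qed

lemma gdist_eq_0_iff: "u < pn G \<Longrightarrow> gdist G u = 0 \<longleftrightarrow> u = 0"
  using gdist_path[of u] unfolding gdist_def by (auto intro: Least_equality)

lemma parent_port_props:
  assumes "u < pn G" "u \<noteq> 0"
  shows "parent_port G u < pdeg G u \<and> gdist G (pnb G u (parent_port G u)) + 1 = gdist G u"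
proof -
  obtain k where k: "gdist G u = Suc k"
    using gdist_eq_0_iff[OF assms(1)] assms(2) by (cases "gdist G u") auto
  then obtain y where y: "(u, y) \<in> edge_rel G" "(y, 0) \<in> edge_rel G ^^ k"
    using gdist_path[OF assms(1)] relpow_Suc_D2 by metis
  then obtain p where p: "p < pdeg G u" "y = pnb G u p" unfolding edge_rel_def by auto
  have "gdist G y \<le> k" using y(2) unfolding gdist_def by (rule Least_le)
  moreover have "(u, 0) \<in> edge_rel G ^^ Suc (gdist G y)"
    using relpow_Suc_I2[OF y(1) gdist_path] pnb_less[OF valid assms(1) p(1)] p(2) by simp
  then have "gdist G u \<le> Suc (gdist G y)" unfolding gdist_def by (rule Least_le)
  ultimately have "p < pdeg G u \<and> gdist G (pnb G u p) + 1 = gdist G u" using k p by auto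
  then show ?thesis unfolding parent_port_def by (rule someI)
qed

lemma parent_table_nth:
  "u < pn G \<Longrightarrow> parent_table G ! u = (if u = 0 then [0, 0, 0]
     else [parent_port G u, rport G u (parent_port G u), pnb G u (parent_port G u)])"
  by (simp add: parent_table_def)

lemma parent_iterate:
  assumes "u < pn G"
  shows "(parent G ^^ k) u < pn G \<and> gdist G ((parent G ^^ k) u) = gdist G u - k"
proof (induction k)
  case (Suc k)
  let ?x = "(parent G ^^ k) u"
  show ?case
  proof (cases "?x = 0")
    case True
    then show ?thesis using Suc parent_table_nth[of 0] gdist_eq_0_iff[of 0] by simp
  next
    case False
    have x: "?x < pn G" "gdist G ?x = gdist G u - k" using Suc by auto
    note p = parent_port_props[OF x(1) False]
    have "parent G ?x = pnb G ?x (parent_port G ?x)" using parent_table_nth[OF x(1)] False by simp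
    moreover have "gdist G (pnb G ?x (parent_port G ?x)) = gdist G u - Suc k"
      using conjunct2[OF p] x(2) by arith
    ultimately show ?thesis using p pnb_less[OF valid x(1) conjunct1[OF p]] by simp
  qed
qed (simp add: assms)

lemma least_parent_iterate:
  assumes "u < pn G"
  shows "(LEAST k. (parent G ^^ k) u = 0) = gdist G u"
proof (rule Least_equality)
  show "(parent G ^^ gdist G u) u = 0"
    using parent_iterate[OF assms, of "gdist G u"] gdist_eq_0_iff[of "(parent G ^^ gdist G u) u"] by simp
  show "gdist G u \<le> k" if "(parent G ^^ k) u = 0" for k
    using parent_iterate[OF assms, of k] that gdist_eq_0_iff[of 0] pn_ge_3[OF valid] by simp
qed

lemma follow_walk_steps:
  "u < pn G \<Longrightarrow> gdist G u = d \<Longrightarrow>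
   \<exists>xs. follow G u (walk_steps (parent_table G) d u) = Some xs \<and> distinct xs \<and> last xs = 0 \<and>
        (\<forall>x \<in> set xs. gdist G x \<le> d)"
proof (induction d arbitrary: u)
  case 0
  then show ?case using gdist_eq_0_iff by simp
next
  case (Suc d)
  then have "u \<noteq> 0" using gdist_eq_0_iff[OF Suc.prems(1)] by simp
  let ?p = "parent_port G u"
  let ?w = "pnb G u ?p"
  have p: "?p < pdeg G u" "gdist G ?w = d"
    using parent_port_props[OF Suc.prems(1) \<open>u \<noteq> 0\<close>] Suc.prems(2) by auto
  obtain xs where xs: "follow G ?w (walk_steps (parent_table G) d ?w) = Some xs" "distinct xs"
    "last xs = 0" "\<forall>x \<in> set xs. gdist G x \<le> d"
    using Suc.IH[OF pnb_less[OF valid Suc.prems(1) p(1)] p(2)] by blast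
  have "follow G u (walk_steps (parent_table G) (Suc d) u) = Some (u # xs)"
    using parent_table_nth[OF Suc.prems(1)] \<open>u \<noteq> 0\<close> p(1) xs(1) by simp
  moreover have "u \<notin> set xs" using xs(4) Suc.prems(2) by auto
  moreover have "xs \<noteq> []" using xs(1) follow_nonempty by blast
  ultimately show ?case using xs Suc.prems(2) by auto
qed

lemma follow_walk:
  assumes "u < pn G"
  shows "\<exists>xs. follow G u (walk (parent_table G) u) = Some xs \<and> distinct xs \<and> last xs = 0"
  using follow_walk_steps[OF assms refl] least_parent_iterate[OF assms] unfolding walk_def by auto

lemma parent_table_bounded: "t \<in> set (parent_table G) \<Longrightarrow> length t = 3 \<and> set t \<subseteq> {..<pn G + 1}"
proof -
  assume "t \<in> set (parent_table G)"
  then obtain u where u: "u < pn G" "t = parent_table G ! u"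
    by (auto simp: parent_table_def)
  show ?thesis
  proof (cases "u = 0")
    case False
    note p = parent_port_props[OF u(1) False]
    then show ?thesis
      using u parent_table_nth[OF u(1)] False pdeg_le_pn[OF valid u(1)]
        rport_props[OF valid u(1) conjunct1[OF p]] pdeg_le_pn[OF valid pnb_less[OF valid u(1) conjunct1[OF p]]]
        pnb_less[OF valid u(1) conjunct1[OF p]] by auto
  qed (use u parent_table_nth in simp)
qed

end

section \<open>Binary encoding of the advice\<close>

fun bits :: "nat \<Rightarrow> nat \<Rightarrow> bool list" where
  "bits 0 x = []"
| "bits (Suc w) x = odd x # bits w (x div 2)"

lemma length_bits [simp]: "length (bits w x) = w"
  by (induction w arbitrary: x) auto

lemma bits_inj: "x < 2 ^ w \<Longrightarrow> y < 2 ^ w \<Longrightarrow> bits w x = bits w y \<Longrightarrow> x = y"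
proof (induction w arbitrary: x y)
  case (Suc w)
  then have "x div 2 = y div 2" "x mod 2 = y mod 2" by (auto simp: mod2_eq_if)
  then show ?case by (metis div_mult_mod_eq)
qed simp

lemma length_concat_uniform: "\<forall>x \<in> set xs. length x = k \<Longrightarrow> length (concat xs) = k * length xs"
  by (induction xs) auto

lemma concat_uniform_inj:
  assumes "0 < k" "\<forall>x \<in> set xs. length x = k" "\<forall>y \<in> set ys. length y = k" "concat xs = concat ys"
  shows "xs = ys"
proof (rule concat_injective[OF assms(4)])
  show "length xs = length ys"
    using arg_cong[OF assms(4), of length] assms(1)
    unfolding length_concat_uniform[OF assms(2)] length_concat_uniform[OF assms(3)] by simp
  show "\<forall>(x, y) \<in> set (zip xs ys). length x = length y"
    using assms(2,3) by (metis (mono_tags, lifting) case_prodI2 set_zip_leftD set_zip_rightD)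
qed

text \<open>The width w is written in unary in front, so that the code is self-delimiting.\<close>
definition encode_nats :: "nat \<Rightarrow> nat list \<Rightarrow> bool list" where
  "encode_nats w xs = replicate w True @ False # concat (map (bits w) xs)"

lemma length_encode_nats: "length (encode_nats w xs) = w + 1 + w * length xs"
  using length_concat_uniform[of "map (bits w) xs" w] unfolding encode_nats_def by simp

lemma replicate_True_False_inj:
  "replicate w True @ False # xs = replicate w' True @ False # xs' \<Longrightarrow> w = w' \<and> xs = xs'"
proof (induction w arbitrary: w')
  case 0
  then show ?case by (cases w') auto
next
  case (Suc w)
  then show ?case by (cases w') auto
qed

lemma encode_nats_inj:
  assumes "0 < w" "set xs \<subseteq> {..<2 ^ w}" "set xs' \<subseteq> {..<2 ^ w'}"
    and eq: "encode_nats w xs = encode_nats w' xs'"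
  shows "w = w' \<and> xs = xs'"
proof -
  have "w = w'" and "concat (map (bits w) xs) = concat (map (bits w) xs')"
    using replicate_True_False_inj[OF eq[unfolded encode_nats_def]] by auto
  then have "map (bits w) xs = map (bits w) xs'"
    using assms(1) by (intro concat_uniform_inj) auto
  moreover have "inj_on (bits w) (set xs \<union> set xs')"
    using assms(2,3) \<open>w = w'\<close> bits_inj by (intro inj_onI) blast
  ultimately show ?thesis using \<open>w = w'\<close> inj_on_map_eq_map by blast
qed

text \<open>Advice data: the election index, the refinement programs of all depths (entries
  tagged by their depth, hence of length 7), and the breadth-first parent table.\<close>
type_synonym advice = "nat \<times> nat list list \<times> nat list list"

definition flatten_advice :: "advice \<Rightarrow> nat list" where
  "flatten_advice = (\<lambda>(phi, es, tbl). phi # length es # concat es @ concat tbl)"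

definition well_shaped :: "advice \<Rightarrow> bool" where
  "well_shaped = (\<lambda>(phi, es, tbl). (\<forall>e \<in> set es. length e = 7) \<and> (\<forall>t \<in> set tbl. length t = 3))"

lemma flatten_advice_inj:
  assumes "well_shaped d" "well_shaped d'" "flatten_advice d = flatten_advice d'"
  shows "d = d'"
proof -
  obtain phi es tbl phi' es' tbl' where d: "d = (phi, es, tbl)" "d' = (phi', es', tbl')"
    by (cases d, cases d') auto
  have shape: "\<forall>e \<in> set es. length e = 7" "\<forall>t \<in> set tbl. length t = 3"
    "\<forall>e \<in> set es'. length e = 7" "\<forall>t \<in> set tbl'. length t = 3"
    using assms(1,2) unfolding d well_shaped_def by auto
  have eq: "phi = phi'" "length es = length es'" "concat es @ concat tbl = concat es' @ concat tbl'"
    using assms(3) unfolding d flatten_advice_def by auto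
  have "length (concat es) = length (concat es')"
    using eq(2) length_concat_uniform[OF shape(1)] length_concat_uniform[OF shape(3)] by simp
  then have "concat es = concat es'" "concat tbl = concat tbl'" using eq(3) by auto
  then have "es = es'" "tbl = tbl'" using shape by (auto intro: concat_uniform_inj)
  then show ?thesis using d eq(1) by simp
qed

definition code_ok :: "nat \<Rightarrow> advice \<Rightarrow> bool" where
  "code_ok w d \<longleftrightarrow> 0 < w \<and> well_shaped d \<and> set (flatten_advice d) \<subseteq> {..<2 ^ w}"

definition encode_advice :: "nat \<Rightarrow> advice \<Rightarrow> bool list" where
  "encode_advice w d = encode_nats w (flatten_advice d)"

definition decode_advice :: "bool list \<Rightarrow> advice" where
  "decode_advice a = snd (SOME (w, d). code_ok w d \<and> encode_advice w d = a)"

lemma decode_encode_advice: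
  assumes "code_ok w d"
  shows "decode_advice (encode_advice w d) = d"
proof -
  have "(SOME (w', d'). code_ok w' d' \<and> encode_advice w' d' = encode_advice w d) = (w, d)"
  proof (rule some_equality)
    fix wd assume wd: "case wd of (w', d') \<Rightarrow> code_ok w' d' \<and> encode_advice w' d' = encode_advice w d"
    obtain w' d' where "wd = (w', d')" by (cases wd)
    with wd have "code_ok w' d'" "encode_nats w' (flatten_advice d') = encode_nats w (flatten_advice d)"
      unfolding encode_advice_def by auto
    then have "w' = w" "flatten_advice d' = flatten_advice d"
      using assms encode_nats_inj unfolding code_ok_def by blast+
    then show "wd = (w, d)"
      using assms \<open>code_ok w' d'\<close> flatten_advice_inj \<open>wd = (w', d')\<close> unfolding code_ok_def by blast
  qed (use assms in simp)
  then show ?thesis unfolding decode_advice_def by simp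
qed

section \<open>The algorithm\<close>

definition elect :: algorithm where
  "elect a T = (case decode_advice a of (phi, es, tbl) \<Rightarrow>
     if tdepth T = phi then Some (walk tbl (local_label es phi T)) else None)"

definition is_level_program :: "pgraph \<Rightarrow> nat \<Rightarrow> nat list list \<Rightarrow> bool" where
  "is_level_program G l es \<longleftrightarrow>
     (\<forall>e \<in> set es. length e = 6 \<and> set e \<subseteq> {..<pn G + 1}) \<and>
     (\<forall>v < pn G. refine_run es (prev_rep G l v) (level_sig G l v) = view_rep G l v) \<and>
     distinct (map (\<lambda>e. e!5) es) \<and>
     set (map (\<lambda>e. e!5) es) \<subseteq> view_rep G l ` {..<pn G} - prev_rep G l ` {..<pn G}"

definition level_program_of :: "pgraph \<Rightarrow> nat \<Rightarrow> nat list list" where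
  "level_program_of G l = (SOME es. is_level_program G l es)"

definition advice_width :: "pgraph \<Rightarrow> nat" where
  "advice_width G = (LEAST w. pn G + 1 < 2 ^ w)"

definition election_programs :: "pgraph \<Rightarrow> nat list list" where
  "election_programs G = tag_programs (level_program_of G) (Suc (election_index G))"

definition advice_of :: "pgraph \<Rightarrow> bool list" where
  "advice_of G = encode_advice (advice_width G) (election_index G, election_programs G, parent_table G)"

context
  fixes G :: pgraph
  assumes valid: "valid_graph G"
begin

lemma is_level_program_of: "is_level_program G l (level_program_of G l)"
proof -
  have reps: "class_min {..<pn G} (level_sig G l) v = view_rep G l v" if "v \<in> {..<pn G}" for v
    using class_min_level_sig[OF valid] that by simp
  then have image: "class_min {..<pn G} (level_sig G l) ` {..<pn G} = view_rep G l ` {..<pn G}" by auto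
  have "finite {..<pn G}" "{..<pn G} \<subseteq> {..<pn G + 1}" "2 \<le> pn G + 1"
    using pn_ge_3[OF valid] by auto
  from refinement_program_exists[OF this signatures_bounded_level_sig[OF valid, of l]
      least_labelling_prev_rep[OF valid, of l] refines_level_sig_prev_rep[OF valid, of l]]
  obtain es where es: "\<forall>e \<in> set es. length e = 6 \<and> set e \<subseteq> {..<pn G + 1}"
    "\<forall>v \<in> {..<pn G}. refine_run es (prev_rep G l v) (level_sig G l v) = class_min {..<pn G} (level_sig G l) v"
    "distinct (map (\<lambda>e. e!5) es)"
    "set (map (\<lambda>e. e!5) es) \<subseteq> class_min {..<pn G} (level_sig G l) ` {..<pn G} - prev_rep G l ` {..<pn G}"
    by (elim exE conjE)
  have "is_level_program G l es"
    unfolding is_level_program_def using es reps image by auto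
  then show ?thesis unfolding level_program_of_def by (rule someI)
qed

lemma new_labels_distinct:
  "distinct (concat (map (\<lambda>l. map (\<lambda>e. e!5) (level_program_of G l)) [0..<N])) \<and>
   set (concat (map (\<lambda>l. map (\<lambda>e. e!5) (level_program_of G l)) [0..<N])) \<subseteq> view_rep G (N - 1) ` {..<pn G}"
proof (induction N)
  case (Suc N)
  let ?prev = "concat (map (\<lambda>l. map (\<lambda>e. e!5) (level_program_of G l)) [0..<N])"
  let ?new = "map (\<lambda>e. e!5) (level_program_of G N)"
  have new: "distinct ?new" "set ?new \<subseteq> view_rep G N ` {..<pn G} - prev_rep G N ` {..<pn G}"
    using is_level_program_of[of N] unfolding is_level_program_def by auto
  have "set ?prev \<subseteq> prev_rep G N ` {..<pn G}"
  proof (cases N)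
    case (Suc k)
    then have "prev_rep G N ` {..<pn G} = view_rep G k ` {..<pn G}" by auto
    then show ?thesis using Suc.IH Suc by simp
  qed simp
  moreover have "set ?prev \<subseteq> view_rep G N ` {..<pn G}"
    by (rule subset_trans[OF conjunct2[OF Suc.IH] view_rep_image_mono[OF valid]]) simp
  ultimately show ?case using Suc.IH new by auto
qed simp

end

lemma length_tag_programs:
  "length (tag_programs E N) = length (concat (map (\<lambda>l. map (\<lambda>e. e!5) (E l)) [0..<N]))"
  unfolding tag_programs_def by (simp add: length_concat comp_def)

lemma advice_width_props:
  "pn G + 1 < 2 ^ advice_width G \<and> 0 < advice_width G \<and> 2 ^ (advice_width G - 1) \<le> pn G + 1"
proof -
  have ex: "\<exists>w. pn G + 1 < 2 ^ w" using less_exp by blast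
  have a: "pn G + 1 < 2 ^ advice_width G"
    unfolding advice_width_def by (rule LeastI_ex[OF ex])
  then have b: "0 < advice_width G" by (cases "advice_width G") auto
  have "\<not> pn G + 1 < 2 ^ (advice_width G - 1)"
  proof
    assume "pn G + 1 < 2 ^ (advice_width G - 1)"
    then have "advice_width G \<le> advice_width G - 1" unfolding advice_width_def by (rule Least_le)
    then show False using b by simp
  qed
  then show ?thesis using a b by simp
qed

context
  fixes G :: pgraph
  assumes valid: "valid_graph G" and feasible: "feasible G"
begin

lemma length_election_programs_le: "length (election_programs G) \<le> pn G"
proof -
  let ?ids = "concat (map (\<lambda>l. map (\<lambda>e. e!5) (level_program_of G l)) [0..<Suc (election_index G)])"
  have "length ?ids = card (set ?ids)" using new_labels_distinct[OF valid] distinct_card by metis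
  also have "\<dots> \<le> card {..<pn G}"
  proof (rule card_mono)
    have "set ?ids \<subseteq> view_rep G (election_index G) ` {..<pn G}"
      using conjunct2[OF new_labels_distinct[OF valid, of "Suc (election_index G)"]]
      by (simp only: diff_Suc_1)
    moreover have "view_rep G (election_index G) ` {..<pn G} \<subseteq> {..<pn G}"
      using view_rep_props(1)[OF valid] by auto
    ultimately show "set ?ids \<subseteq> {..<pn G}" by (rule subset_trans)
  qed simp
  finally show ?thesis unfolding election_programs_def length_tag_programs by simp
qed

lemma election_programs_bounded: "e \<in> set (election_programs G) \<Longrightarrow> length e = 7 \<and> set e \<subseteq> {..<pn G + 1}"
  using is_level_program_of[OF valid] election_index_less_pn[OF valid feasible]
  unfolding election_programs_def tag_programs_def is_level_program_def by fastforce

lemma code_ok_advice: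
  "code_ok (advice_width G) (election_index G, election_programs G, parent_table G)"
proof -
  have "set (flatten_advice (election_index G, election_programs G, parent_table G)) \<subseteq> {..<pn G + 2}"
    using election_index_less_pn[OF valid feasible] length_election_programs_le election_programs_bounded
      parent_table_bounded[OF valid] unfolding flatten_advice_def by fastforce
  moreover have "pn G + 2 \<le> 2 ^ advice_width G" using advice_width_props[of G] by simp
  ultimately show ?thesis
    unfolding code_ok_def well_shaped_def
    using advice_width_props[of G] election_programs_bounded parent_table_bounded[OF valid] by fastforce
qed

lemma elect_advice_of:
  "elect (advice_of G) T =
     (if tdepth T = election_index G then Some (walk (parent_table G) (local_label (election_programs G) (election_index G) T))
      else None)"
  unfolding elect_def advice_of_def decode_encode_advice[OF code_ok_advice] by simp

lemma local_label_election_programs: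
  assumes "v < pn G"
  shows "local_label (election_programs G) (election_index G) (aview G (election_index G) v) = v"
proof -
  have "refine_run (level_program (election_programs G) k) (prev_rep G k u) (level_sig G k u) = view_rep G k u"
    if "k \<le> election_index G" "u < pn G" for k u
    using is_level_program_of[OF valid, of k] that
    unfolding election_programs_def level_program_tag_programs is_level_program_def by simp
  then show ?thesis
    using local_label_aview[OF valid _ assms] view_rep_election_index[OF valid feasible assms] by simp
qed

lemma elects_advice_of: "elects_in_time elect (advice_of G) G (election_index G)"
proof -
  have "\<exists>r \<le> election_index G. elect (advice_of G) (aview G r v) \<noteq> None \<and>
      (\<forall>r' < r. elect (advice_of G) (aview G r' v) = None) \<and>
      (\<exists>xs. follow G v (the (elect (advice_of G) (aview G r v))) = Some xs \<and> distinct xs \<and> last xs = 0)"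
    if v: "v < pn G" for v
  proof -
    obtain xs where "follow G v (walk (parent_table G) v) = Some xs" "distinct xs" "last xs = 0"
      using follow_walk[OF valid v] by blast
    then show ?thesis
      using elect_advice_of tdepth_aview[OF valid v] local_label_election_programs[OF v]
      by (intro exI[of _ "election_index G"]) auto
  qed
  moreover have "0 < pn G" using pn_ge_3[OF valid] by simp
  ultimately show ?thesis unfolding elects_in_time_def by blast
qed

lemma length_advice_of: "length (advice_of G) \<le> advice_width G * (10 * pn G + 3) + 1"
proof -
  have "length (flatten_advice (election_index G, election_programs G, parent_table G)) = 2 + 7 * length (election_programs G) + 3 * pn G"
    using length_concat_uniform[of "election_programs G" 7] length_concat_uniform[of "parent_table G" 3]
      election_programs_bounded parent_table_bounded[OF valid]
    unfolding flatten_advice_def by (simp add: parent_table_def)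
  then have "length (advice_of G) = advice_width G + 1 + advice_width G * (2 + 7 * length (election_programs G) + 3 * pn G)"
    unfolding advice_of_def encode_advice_def length_encode_nats by simp
  also have "\<dots> \<le> advice_width G + 1 + advice_width G * (2 + 7 * pn G + 3 * pn G)"
    using length_election_programs_le by simp
  finally show ?thesis by (simp add: algebra_simps)
qed

end

lemma linear_log_bound:
  fixes x w :: real
  assumes x: "3 \<le> x" and w: "0 \<le> w" "w \<le> log 2 x + 2"
  shows "w * (10 * x + 3) + 1 \<le> 50 * x * log 2 x"
proof -
  let ?L = "log 2 x"
  have L: "1 \<le> ?L" using x by simp
  have "w * (10 * x + 3) \<le> (?L + 2) * (10 * x + 3)" using w x by (intro mult_right_mono) auto
  moreover have "(?L + 2) * (10 * x + 3) = 10 * (x * ?L) + 3 * ?L + 20 * x + 6"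
    by (simp add: algebra_simps)
  moreover have "?L \<le> x * ?L" "x \<le> x * ?L"
    using L x by (simp_all add: mult_le_cancel_right1 mult_le_cancel_left1)
  ultimately show ?thesis using x by linarith
qed

lemma advice_width_le_log:
  assumes "valid_graph G"
  shows "real (advice_width G) \<le> log 2 (real (pn G)) + 2"
proof -
  have "2 ^ (advice_width G - 1) \<le> 2 * pn G"
    using advice_width_props[of G] pn_ge_3[OF assms] by simp
  then have "real (advice_width G - 1) \<le> log 2 (real (2 * pn G))" by (rule le_log2_of_power)
  also have "\<dots> = 1 + log 2 (real (pn G))" using pn_ge_3[OF assms] by (simp add: log_mult)
  finally show ?thesis using advice_width_props[of G] by (simp add: of_nat_diff)
qed

theorem theorem1:
  shows "\<exists>(C::real) > 0. \<exists>(A::algorithm). \<exists>Adv :: pgraph \<Rightarrow> bool list.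
     \<forall>G. valid_graph G \<and> feasible G \<longrightarrow>
        real (length (Adv G)) \<le> C * real (pn G) * log 2 (real (pn G)) \<and>
        elects_in_time A (Adv G) G (election_index G)"
proof (intro exI[of _ 50] conjI exI[of _ elect] exI[of _ advice_of] allI impI)
  fix G assume G: "valid_graph G \<and> feasible G"
  then have "real (length (advice_of G)) \<le> real (advice_width G) * (10 * real (pn G) + 3) + 1"
    using length_advice_of[of G] by (metis (mono_tags, lifting) of_nat_add of_nat_le_iff of_nat_mult
      of_nat_numeral of_nat_1)
  also have "\<dots> \<le> 50 * real (pn G) * log 2 (real (pn G))"
    using G pn_ge_3 advice_width_le_log by (intro linear_log_bound) auto
  finally show "real (length (advice_of G)) \<le> 50 * real (pn G) * log 2 (real (pn G))" .
  show "elects_in_time elect (advice_of G) G (election_index G)" using G elects_advice_of by blast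
qed simp

end
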